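(* (a) For the complete graph $K_n$ on $n$ vertices, $\mathrm{SOL}(K_n)=\Delta_n:=\{x\in\mathbb{R}^n\mid x\geq 0,\ \mathbf{e}^\top x=1\}$. (b) If $G$ is a forest, $x\in\mathrm{SOL}(G)$ and $\sigma(x)=V(G)$, then $G$ is a disjoint union of copies of $K_1$ and $K_2$. (c) If $G$ is a forest and $x\in\mathrm{SOL}(G)$, then the induced subgraph $G_{\sigma(x)}$ is a disjoint union of copies of $K_1$ and $K_2$. (d) If $R_{n,d}$ is a $d$-regular graph on $n$ vertices, then $\beta(R_{n,d})\geq \frac{n}{d+1}$.
   Context: All graphs are simple (finite, undirected, no loops). For a graph $H$ with adjacency matrix $A_H$, $\mathrm{SOL}(H)$ is the set of $x$ with $x\geq 0$, $(A_H+I)x\geq\mathbf{e}$ and $x^\top((A_H+I)x-\mathbf{e})=0$ ($I$ identity, $\mathbf{e}$ all-ones vector). $\sigma(x):=\{i\mid x_i>0\}$; $G_S$ is the subgraph induced by $S$. A forest is a graph without cycles. $\beta(G)$ is the minimum cardinality of a maximal independent set of $G$. *)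

theory Defs
  imports Complex_Main
begin

definition simple_graph :: "'a set \<Rightarrow> ('a \<Rightarrow> 'a \<Rightarrow> bool) \<Rightarrow> bool" where
  "simple_graph V E \<longleftrightarrow> finite V \<and>
     (\<forall>u v. E u v \<longrightarrow> u \<in> V \<and> v \<in> V \<and> u \<noteq> v \<and> E v u)"

definition adj :: "('a \<Rightarrow> 'a \<Rightarrow> bool) \<Rightarrow> 'a \<Rightarrow> 'a \<Rightarrow> real" where
  "adj E i j = (if E i j then 1 else 0)"

definition AIx :: "'a set \<Rightarrow> ('a \<Rightarrow> 'a \<Rightarrow> bool) \<Rightarrow> ('a \<Rightarrow> real) \<Rightarrow> 'a \<Rightarrow> real" where
  "AIx V E x i = (\<Sum>j\<in>V. (adj E i j + (if i = j then 1 else 0)) * x j)"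

text \<open>x in SOL(H); only the entries of x on V matter.\<close>
definition SOL :: "'a set \<Rightarrow> ('a \<Rightarrow> 'a \<Rightarrow> bool) \<Rightarrow> ('a \<Rightarrow> real) \<Rightarrow> bool" where
  "SOL V E x \<longleftrightarrow> (\<forall>i\<in>V. x i \<ge> 0) \<and> (\<forall>i\<in>V. AIx V E x i \<ge> 1) \<and>
     (\<Sum>i\<in>V. x i * (AIx V E x i - 1)) = 0"

definition supp :: "'a set \<Rightarrow> ('a \<Rightarrow> real) \<Rightarrow> 'a set" where
  "supp V x = {i \<in> V. x i > 0}"

definition simplex :: "'a set \<Rightarrow> ('a \<Rightarrow> real) \<Rightarrow> bool" where
  "simplex V x \<longleftrightarrow> (\<forall>i\<in>V. x i \<ge> 0) \<and> (\<Sum>i\<in>V. x i) = 1"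

definition complete_graph :: "'a set \<Rightarrow> 'a \<Rightarrow> 'a \<Rightarrow> bool" where
  "complete_graph V u v \<longleftrightarrow> u \<in> V \<and> v \<in> V \<and> u \<noteq> v"

definition induced :: "('a \<Rightarrow> 'a \<Rightarrow> bool) \<Rightarrow> 'a set \<Rightarrow> 'a \<Rightarrow> 'a \<Rightarrow> bool" where
  "induced E S u v \<longleftrightarrow> E u v \<and> u \<in> S \<and> v \<in> S"

definition is_cycle :: "'a set \<Rightarrow> ('a \<Rightarrow> 'a \<Rightarrow> bool) \<Rightarrow> 'a list \<Rightarrow> bool" where
  "is_cycle V E cs \<longleftrightarrow> length cs \<ge> 3 \<and> distinct cs \<and> set cs \<subseteq> V \<and>
     (\<forall>i. Suc i < length cs \<longrightarrow> E (cs ! i) (cs ! Suc i)) \<and> E (last cs) (hd cs)"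

definition forest :: "'a set \<Rightarrow> ('a \<Rightarrow> 'a \<Rightarrow> bool) \<Rightarrow> bool" where
  "forest V E \<longleftrightarrow> simple_graph V E \<and> \<not> (\<exists>cs. is_cycle V E cs)"

definition union_K1_K2 :: "'a set \<Rightarrow> ('a \<Rightarrow> 'a \<Rightarrow> bool) \<Rightarrow> bool" where
  "union_K1_K2 V E \<longleftrightarrow> (\<exists>P. \<Union>P = V \<and> (\<forall>C\<in>P. \<forall>D\<in>P. C \<noteq> D \<longrightarrow> C \<inter> D = {}) \<and>
     (\<forall>C\<in>P. (card C = 1 \<or> card C = 2) \<and> (\<forall>u\<in>C. \<forall>v\<in>C. u \<noteq> v \<longrightarrow> E u v)) \<and>
     (\<forall>u v. E u v \<longrightarrow> (\<exists>C\<in>P. u \<in> C \<and> v \<in> C)))"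

definition degree :: "'a set \<Rightarrow> ('a \<Rightarrow> 'a \<Rightarrow> bool) \<Rightarrow> 'a \<Rightarrow> nat" where
  "degree V E v = card {u \<in> V. E v u}"

definition regular :: "'a set \<Rightarrow> ('a \<Rightarrow> 'a \<Rightarrow> bool) \<Rightarrow> nat \<Rightarrow> bool" where
  "regular V E d \<longleftrightarrow> (\<forall>v\<in>V. degree V E v = d)"

definition independent :: "'a set \<Rightarrow> ('a \<Rightarrow> 'a \<Rightarrow> bool) \<Rightarrow> 'a set \<Rightarrow> bool" where
  "independent V E S \<longleftrightarrow> S \<subseteq> V \<and> (\<forall>u\<in>S. \<forall>v\<in>S. \<not> E u v)"

definition maximal_independent :: "'a set \<Rightarrow> ('a \<Rightarrow> 'a \<Rightarrow> bool) \<Rightarrow> 'a set \<Rightarrow> bool" where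
  "maximal_independent V E S \<longleftrightarrow> independent V E S \<and>
     (\<forall>T. independent V E T \<and> S \<subseteq> T \<longrightarrow> T = S)"

definition beta :: "'a set \<Rightarrow> ('a \<Rightarrow> 'a \<Rightarrow> bool) \<Rightarrow> nat" where
  "beta V E = Min {card S | S. maximal_independent V E S}"

end

theory Submission
  imports Defs
begin

text \<open>(a) On the complete graph every row of \<open>(A + I) x\<close> equals \<open>s = e\<^sup>T x\<close>, so complementarity
  reads \<open>s (s - 1) = 0\<close> with \<open>s \<ge> 1\<close>. (b), (c) By complementarity, \<open>(A + I) x = e\<close> on the support,
  and the induced subgraph on the support is again a forest. If a vertex \<open>a\<close> of that subgraph had
  two neighbours \<open>b, w\<close>, comparing rows \<open>a\<close> and \<open>b\<close> shows that \<open>b\<close> has a neighbour other than \<open>a\<close>;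
  so a non-backtracking walk could be continued forever, which in a finite graph closes a cycle.
  Hence all degrees are at most one. (d) A maximal independent set \<open>S\<close> dominates the graph, so
  \<open>n \<le> |S| (d + 1)\<close>.\<close>

lemma SOL_complete_graph_iff_simplex:
  assumes "finite V" "V \<noteq> {}"
  shows "SOL V (complete_graph V) x \<longleftrightarrow> simplex V x"
proof -
  let ?s = "\<Sum>j\<in>V. x j"
  have row: "AIx V (complete_graph V) x i = ?s" if "i \<in> V" for i
    unfolding AIx_def adj_def complete_graph_def using that by (intro sum.cong) auto
  have compl: "(\<Sum>i\<in>V. x i * (AIx V (complete_graph V) x i - 1)) = ?s * (?s - 1)"
    by (simp add: row sum_distrib_right)
  show ?thesis
  proof
    assume "SOL V (complete_graph V) x"
    then have "\<forall>i\<in>V. x i \<ge> 0" "?s \<ge> 1" "?s * (?s - 1) = 0"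
      using assms(2) unfolding SOL_def compl by (auto simp: row)
    then show "simplex V x" unfolding simplex_def by auto
  next
    assume "simplex V x"
    then show "SOL V (complete_graph V) x" unfolding SOL_def compl simplex_def by (auto simp: row)
  qed
qed

lemma SOL_AIx_eq_1:
  assumes "finite V" "SOL V E x" "i \<in> V" "x i > 0"
  shows "AIx V E x i = 1"
proof -
  have "\<forall>j\<in>V. x j * (AIx V E x j - 1) = 0"
    using assms(2) sum_nonneg_eq_0_iff[OF assms(1), of "\<lambda>j. x j * (AIx V E x j - 1)"]
    unfolding SOL_def by auto
  with assms(3,4) show ?thesis by force
qed

lemma induced_self:
  assumes "simple_graph V E"
  shows "induced E V = E"
  using assms unfolding simple_graph_def induced_def by (auto intro!: ext)

lemma forest_induced:
  assumes "forest V E" "S \<subseteq> V"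
  shows "forest S (induced E S)"
proof -
  have "simple_graph S (induced E S)"
    using assms finite_subset unfolding forest_def simple_graph_def induced_def by blast
  moreover have "is_cycle V E cs" if "is_cycle S (induced E S) cs" for cs
    using that assms(2) unfolding is_cycle_def induced_def by auto
  ultimately show ?thesis using assms(1) unfolding forest_def by blast
qed

lemma AIx_induced_supp:
  assumes "finite V" "SOL V E x" "i \<in> supp V x"
  shows "AIx (supp V x) (induced E (supp V x)) x i = AIx V E x i"
  unfolding AIx_def
proof (rule sum.mono_neutral_cong_left[OF assms(1)])
  show "supp V x \<subseteq> V" by (auto simp: supp_def)
  have "x j = 0" if "j \<in> V - supp V x" for j
    using that assms(2) unfolding SOL_def supp_def by force
  then show "\<forall>j\<in>V - supp V x. (adj E i j + (if i = j then 1 else 0)) * x j = 0" by simp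
qed (use assms(3) in \<open>simp add: adj_def induced_def\<close>)

lemma nonbacktracking_walk_imp_cycle:
  assumes "simple_graph V E"
    and walk: "\<And>k. E (f k) (f (Suc k))" and nonback: "\<And>k. f (Suc (Suc k)) \<noteq> f k"
  shows "\<exists>cs. is_cycle V E cs"
proof -
  have fV: "f k \<in> V" for k using walk[of k] assms(1) unfolding simple_graph_def by blast
  have "\<not> inj f"
    using fV assms(1) finite_subset[of "range f" V] finite_imageD[of f UNIV]
    unfolding simple_graph_def by blast
  then obtain i j where "i < j" "f i = f j"
    unfolding inj_def by (metis linorder_neqE_nat)
  then have "\<exists>d. d > 0 \<and> (\<exists>i. f i = f (i + d))"
    by (intro exI[of _ "j - i"]) (auto intro: exI[of _ i])
  then obtain d i where di: "d > 0" "f i = f (i + d)"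
    and dmin: "\<And>d' i'. d' < d \<Longrightarrow> \<not> (d' > 0 \<and> f i' = f (i' + d'))"
    unfolding exists_least_iff[of "\<lambda>d. d > 0 \<and> (\<exists>i. f i = f (i + d))"] by blast
  have "d \<ge> 3"
  proof -
    have "\<not> E v v" for v using assms(1) unfolding simple_graph_def by blast
    then have "d \<noteq> 1" using di walk[of i] by auto
    moreover have "d \<noteq> 2" using di nonback[of i] by (auto simp: numeral_2_eq_2)
    ultimately show ?thesis using di(1) by linarith
  qed
  define cs where "cs = map (\<lambda>k. f (i + k)) [0..<d]"
  have len: "length cs = d" and nth: "\<And>k. k < d \<Longrightarrow> cs ! k = f (i + k)"
    by (simp_all add: cs_def)
  have "is_cycle V E cs"
    unfolding is_cycle_def
  proof (intro conjI allI impI)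
    show "3 \<le> length cs" using len \<open>d \<ge> 3\<close> by simp
    have "f (i + p) \<noteq> f (i + q)" if "p < q" "q < d" for p q
      using dmin[of "q - p" "i + p"] that by simp
    then show "distinct cs" unfolding distinct_conv_nth len by (metis nth linorder_neqE_nat)
    show "set cs \<subseteq> V" using fV by (auto simp: cs_def)
    show "E (cs ! k) (cs ! Suc k)" if "Suc k < length cs" for k
      using that nth len walk[of "i + k"] by simp
    have "cs \<noteq> []" using len di(1) by auto
    then have "last cs = f (i + (d - 1))" "hd cs = f (i + d)"
      using len nth di by (simp_all add: last_conv_nth hd_conv_nth)
    then show "E (last cs) (hd cs)" using walk[of "i + (d - 1)"] di(1) by simp
  qed
  then show ?thesis by blast
qed

text \<open>By \<open>extend\<close>, a non-backtracking walk started along an edge at a vertex with two neighbours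
  never gets stuck.\<close>
lemma acyclic_neighbour_unique:
  assumes "forest V E"
    and extend: "\<And>a b w. E a b \<Longrightarrow> E a w \<Longrightarrow> w \<noteq> b \<Longrightarrow> \<exists>c. E b c \<and> c \<noteq> a"
    and "E v u" "E v w"
  shows "u = w"
proof (rule ccontr)
  assume "u \<noteq> w"
  have sym: "E a b \<Longrightarrow> E b a" for a b using assms(1) unfolding forest_def simple_graph_def by blast
  define next_vx where "next_vx a b = (SOME c. E b c \<and> c \<noteq> a)" for a b
  have next_vx: "E b (next_vx a b) \<and> next_vx a b \<noteq> a"
    if "E a b" "E a c" "c \<noteq> b" for a b c
    unfolding next_vx_def by (rule someI_ex) (use that extend in blast)
  define p where "p k = ((\<lambda>(a, b). (b, next_vx a b)) ^^ k) (v, u)" for k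
  have p_Suc: "p (Suc k) = (snd (p k), next_vx (fst (p k)) (snd (p k)))" for k
    by (simp add: p_def split: prod.splits)
  have branching: "E (fst (p k)) (snd (p k)) \<and> (\<exists>c. E (fst (p k)) c \<and> c \<noteq> snd (p k))" for k
  proof (induction k)
    case 0 show ?case using assms(3,4) \<open>u \<noteq> w\<close> by (auto simp: p_def)
  next
    case (Suc k)
    then obtain c where "E (fst (p k)) (snd (p k))" "E (fst (p k)) c" "c \<noteq> snd (p k)" by blast
    with next_vx[OF this] sym show ?case by (auto simp: p_Suc intro!: exI[of _ "fst (p k)"])
  qed
  have "\<exists>cs. is_cycle V E cs"
  proof (rule nonbacktracking_walk_imp_cycle[of V E "\<lambda>k. fst (p k)"])
    show "simple_graph V E" using assms(1) unfolding forest_def by blast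
    show "E (fst (p k)) (fst (p (Suc k)))" for k using branching[of k] by (simp add: p_Suc)
    show "fst (p (Suc (Suc k))) \<noteq> fst (p k)" for k
      using branching[of k] next_vx[of "fst (p k)" "snd (p k)"] by (auto simp: p_Suc)
  qed
  then show False using assms(1) unfolding forest_def by blast
qed

lemma union_K1_K2_if_neighbour_unique:
  assumes "simple_graph V E" and unique: "\<And>v u w. E v u \<Longrightarrow> E v w \<Longrightarrow> u = w"
  shows "union_K1_K2 V E"
proof -
  have sym: "E u v \<Longrightarrow> E v u" and inV: "E u v \<Longrightarrow> u \<in> V \<and> v \<in> V" and irr: "\<not> E u u" for u v
    using assms(1) unfolding simple_graph_def by blast+
  define block where "block v = insert v {u. E v u}" for v
  have block_single: "block v = {v}" if "\<And>u. \<not> E v u" for v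
    using that by (auto simp: block_def)
  have block_pair: "block v = {v, u}" if "E v u" for v u
    using that unique by (auto simp: block_def)
  show ?thesis unfolding union_K1_K2_def
  proof (intro exI[of _ "block ` V"] conjI ballI allI impI)
    show "\<Union>(block ` V) = V" using inV by (auto simp: block_def)
  next
    fix C D assume "C \<in> block ` V" "D \<in> block ` V" "C \<noteq> D"
    then obtain v w where C: "C = block v" and D: "D = block w" by blast
    show "C \<inter> D = {}"
    proof (rule ccontr)
      assume "C \<inter> D \<noteq> {}"
      then obtain z where zv: "z = v \<or> E v z" and zw: "z = w \<or> E w z"
        using C D by (auto simp: block_def)
      have "v = w \<or> E v w"
      proof (cases "z = v")
        case True
        with zw sym show ?thesis by blast
      next
        case False
        with zv have "E v z" by blast
        from zw show ?thesis
        proof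
          assume "E w z"
          then show ?thesis using unique[OF sym[OF \<open>E v z\<close>] sym] by blast
        qed (use \<open>E v z\<close> in blast)
      qed
      then have "C = D" using C D block_pair[of v w] block_pair[of w v] sym[of v w] by auto
      with \<open>C \<noteq> D\<close> show False ..
    qed
  next
    fix C assume "C \<in> block ` V"
    then obtain v where C: "C = block v" by blast
    show "card C = 1 \<or> card C = 2"
    proof (cases "\<exists>u. E v u")
      case True
      then obtain u where "E v u" by blast
      then have "C = {v, u}" "u \<noteq> v" using C block_pair irr by blast+
      then show ?thesis by simp
    qed (use C block_single in auto)
  next
    fix C u w assume "C \<in> block ` V" "u \<in> C" "w \<in> C" "u \<noteq> w"
    then obtain v where C: "C = block v" by blast
    show "E u w"
    proof (cases "\<exists>y. E v y")
      case True
      then obtain y where "E v y" by blast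
      then show ?thesis using C block_pair[of v y] sym \<open>u \<in> C\<close> \<open>w \<in> C\<close> \<open>u \<noteq> w\<close> by auto
    qed (use C block_single \<open>u \<in> C\<close> \<open>w \<in> C\<close> \<open>u \<noteq> w\<close> in auto)
  next
    fix u v assume "E u v"
    then show "\<exists>C\<in>block ` V. u \<in> C \<and> v \<in> C" using inV by (auto simp: block_def)
  qed
qed

text \<open>Rows \<open>a\<close> and \<open>b\<close> of \<open>(A + I) x = e\<close>: row \<open>a\<close> contains \<open>x a + x b + x w\<close>, so row \<open>b\<close> cannot
  consist of \<open>x a + x b\<close> alone.\<close>
lemma positive_solution_extend:
  assumes "simple_graph V E" and pos: "\<forall>i\<in>V. x i > 0" and rows: "\<forall>i\<in>V. AIx V E x i = 1"
    and "E a b" "E a w" "w \<noteq> b"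
  shows "\<exists>c. E b c \<and> c \<noteq> a"
proof (rule ccontr)
  assume "\<not> ?thesis"
  then have only_a: "E b c \<Longrightarrow> c = a" for c by blast
  have fin: "finite V" and abw: "a \<in> V" "b \<in> V" "w \<in> V" "a \<noteq> b" "a \<noteq> w" "E b a"
    and irr: "\<not> E a a" "\<not> E b b"
    using assms(1,4,5) unfolding simple_graph_def by blast+
  let ?t = "\<lambda>i j. (adj E i j + (if i = j then 1 else 0)) * x j"
  have "x a + x b + x w = (\<Sum>j\<in>{a, b, w}. ?t a j)"
    using abw irr assms(4-6) by (auto simp: adj_def)
  also have "\<dots> \<le> (\<Sum>j\<in>V. ?t a j)"
    by (rule sum_mono2) (use fin abw pos in \<open>auto simp: adj_def\<close>)
  also have "\<dots> = (\<Sum>j\<in>V. ?t b j)" using rows abw unfolding AIx_def by simp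
  also have "\<dots> = (\<Sum>j\<in>V. (if j = a then x a else 0) + (if j = b then x b else 0))"
    using abw irr by (intro sum.cong) (auto simp: adj_def dest: only_a)
  also have "\<dots> = x a + x b" using abw fin by (simp add: sum.distrib)
  finally show False using pos abw by force
qed

lemma forest_supp_union_K1_K2:
  assumes "forest V E" "SOL V E x"
  shows "union_K1_K2 (supp V x) (induced E (supp V x))"
proof -
  let ?S = "supp V x" and ?F = "induced E (supp V x)"
  have fin: "finite V" using assms(1) unfolding forest_def simple_graph_def by blast
  have forest: "forest ?S ?F" by (rule forest_induced[OF assms(1)]) (auto simp: supp_def)
  then have graph: "simple_graph ?S ?F" unfolding forest_def by blast
  have pos: "\<forall>i\<in>?S. x i > 0" by (auto simp: supp_def)
  have rows: "\<forall>i\<in>?S. AIx ?S ?F x i = 1"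
    using AIx_induced_supp[OF fin assms(2)] SOL_AIx_eq_1[OF fin assms(2)] by (auto simp: supp_def)
  show ?thesis
  proof (rule union_K1_K2_if_neighbour_unique[OF graph])
    show "u = w" if "?F v u" "?F v w" for v u w
      using acyclic_neighbour_unique[OF forest positive_solution_extend[OF graph pos rows] that] .
  qed
qed

lemma maximal_independent_exists:
  assumes "finite V"
  shows "\<exists>S. maximal_independent V E S"
proof -
  let ?I = "{S. independent V E S}"
  have "?I \<subseteq> Pow V" by (auto simp: independent_def)
  then have "finite ?I" using assms finite_subset by blast
  moreover have "{} \<in> ?I" by (simp add: independent_def)
  ultimately obtain S where "S \<in> ?I" "\<forall>T\<in>?I. S \<subseteq> T \<longrightarrow> S = T"
    using finite_has_maximal[of ?I] by blast
  then show ?thesis unfolding maximal_independent_def by auto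
qed

lemma beta_attained:
  assumes "finite V"
  shows "\<exists>S. maximal_independent V E S \<and> beta V E = card S"
proof -
  let ?cards = "{card S | S. maximal_independent V E S}"
  have "?cards \<subseteq> card ` Pow V"
    by (auto simp: maximal_independent_def independent_def)
  then have "finite ?cards" using assms by (meson finite_Pow_iff finite_surj)
  moreover have "?cards \<noteq> {}" using maximal_independent_exists[OF assms] by blast
  ultimately have "beta V E \<in> ?cards" unfolding beta_def by (rule Min_in)
  then show ?thesis by blast
qed

lemma maximal_independent_dominating:
  assumes "simple_graph V E" "maximal_independent V E S"
  shows "V \<subseteq> S \<union> (\<Union>s\<in>S. {u \<in> V. E s u})"
proof
  fix v assume v: "v \<in> V"
  show "v \<in> S \<union> (\<Union>s\<in>S. {u \<in> V. E s u})"
  proof (rule ccontr)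
    assume v_new: "v \<notin> S \<union> (\<Union>s\<in>S. {u \<in> V. E s u})"
    then have "v \<notin> S" by blast
    have nonadj: "\<not> E s v" "\<not> E v s" if "s \<in> S" for s
      using assms(1) v v_new that unfolding simple_graph_def by blast+
    have "\<not> E v v" using assms(1) unfolding simple_graph_def by blast
    then have "independent V E (insert v S)"
      using assms(2) v nonadj unfolding maximal_independent_def independent_def by auto
    then show False using assms(2) \<open>v \<notin> S\<close> unfolding maximal_independent_def by blast
  qed
qed

lemma card_le_card_maximal_independent_regular:
  assumes "simple_graph V E" "regular V E d" "maximal_independent V E S"
  shows "card V \<le> card S * (d + 1)"
proof -
  have fin: "finite V" using assms(1) unfolding simple_graph_def by blast
  have SV: "S \<subseteq> V" using assms(3) unfolding maximal_independent_def independent_def by blast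
  then have finS: "finite S" using fin finite_subset by blast
  have "card V \<le> card (S \<union> (\<Union>s\<in>S. {u \<in> V. E s u}))"
    using maximal_independent_dominating[OF assms(1,3)] fin finS by (intro card_mono) auto
  also have "\<dots> \<le> card S + card (\<Union>s\<in>S. {u \<in> V. E s u})" by (rule card_Un_le)
  also have "card (\<Union>s\<in>S. {u \<in> V. E s u}) \<le> (\<Sum>s\<in>S. card {u \<in> V. E s u})"
    by (rule card_UN_le[OF finS])
  also have "(\<Sum>s\<in>S. card {u \<in> V. E s u}) = card S * d"
    using assms(2) SV unfolding regular_def degree_def by (simp add: subset_iff)
  finally show ?thesis by simp
qed

lemma beta_regular_ge:
  assumes "simple_graph V E" "regular V E d"
  shows "real (card V) / (real d + 1) \<le> real (beta V E)"
proof -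
  obtain S where S: "maximal_independent V E S" "beta V E = card S"
    using beta_attained assms(1) unfolding simple_graph_def by blast
  have "real (card V) \<le> real (card S) * (real d + 1)"
    using card_le_card_maximal_independent_regular[OF assms S(1)]
    by (metis of_nat_1 of_nat_add of_nat_le_iff of_nat_mult)
  then show ?thesis using S(2) by (simp add: divide_le_eq add_pos_pos)
qed

theorem lemma4:
  shows "(\<forall>(V::'a set) n. finite V \<and> card V = n \<and> n \<ge> 1 \<longrightarrow>
            (\<forall>x. SOL V (complete_graph V) x \<longleftrightarrow> simplex V x))
    \<and> (\<forall>(V::'a set) E x. forest V E \<and> SOL V E x \<and> supp V x = V \<longrightarrow> union_K1_K2 V E)
    \<and> (\<forall>(V::'a set) E x. forest V E \<and> SOL V E x \<longrightarrow>
            union_K1_K2 (supp V x) (induced E (supp V x)))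
    \<and> (\<forall>(V::'a set) E n d. simple_graph V E \<and> card V = n \<and> regular V E d \<longrightarrow>
            real (beta V E) \<ge> real n / (real d + 1))"
proof (intro conjI allI impI)
  fix V :: "'a set" and n x assume "finite V \<and> card V = n \<and> n \<ge> 1"
  then have "finite V" "V \<noteq> {}" by auto
  then show "SOL V (complete_graph V) x \<longleftrightarrow> simplex V x" by (rule SOL_complete_graph_iff_simplex)
next
  fix V :: "'a set" and E x assume "forest V E \<and> SOL V E x \<and> supp V x = V"
  moreover from this have "simple_graph V E" unfolding forest_def by blast
  ultimately show "union_K1_K2 V E" using forest_supp_union_K1_K2[of V E x] by (simp add: induced_self)
next
  fix V :: "'a set" and E x assume "forest V E \<and> SOL V E x"
  then show "union_K1_K2 (supp V x) (induced E (supp V x))" using forest_supp_union_K1_K2 by blast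
next
  fix V :: "'a set" and E n d assume "simple_graph V E \<and> card V = n \<and> regular V E d"
  then show "real (beta V E) \<ge> real n / (real d + 1)" using beta_regular_ge by blast
qed

end
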